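(* Let $X$ be a real Banach space, $V$ a closed subset of $X$, $F=\{x_1,\dots,x_N\}$ a finite subset of $X$, and $f:[0,\infty)^N\to[0,\infty)$ a convex monotone function. Then every sequence $(v_n)\subseteq V$ with $r_f(v_n,F)\to\mathrm{rad}_V^f(F)$ is convergent if and only if for every $\varepsilon>0$ there exists $\delta>0$ such that $\mathrm{diam}(\delta\text{-}\mathrm{Cent}_V^f(F))<\varepsilon$.
   Context: $f$ is monotone if $a\le b$ coordinatewise implies $f(a)\le f(b)$. $r_f(x,F)=f(\|x-x_1\|,\dots,\|x-x_N\|)$, $\mathrm{rad}_V^f(F)=\inf_{v\in V}r_f(v,F)$, and $\delta\text{-}\mathrm{Cent}_V^f(F)=\{v\in V:r_f(v,F)\le\mathrm{rad}_V^f(F)+\delta\}$; $\mathrm{diam}$ denotes the diameter of a set. *)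

theory Defs
  imports "HOL-Analysis.Analysis"
begin

text \<open>The finite set F = {x_1,...,x_N} is given by an indexing x :: 'n \<Rightarrow> 'a
  over a finite index type 'n with N = CARD('n); f is defined on [0,\<infinity>)^N,
  modelled as vectors real^'n with nonnegative coordinates.\<close>

definition nonneg_orthant :: "(real^'n) set" where
  "nonneg_orthant = {t. \<forall>i. 0 \<le> t $ i}"

definition monotone_fun :: "(real^'n \<Rightarrow> real) \<Rightarrow> bool" where
  "monotone_fun f \<longleftrightarrow> (\<forall>a\<in>nonneg_orthant. \<forall>b\<in>nonneg_orthant.
      (\<forall>i. a $ i \<le> b $ i) \<longrightarrow> f a \<le> f b)"

definition r_f :: "(real^'n \<Rightarrow> real) \<Rightarrow> ('n::finite \<Rightarrow> 'a::real_normed_vector) \<Rightarrow> 'a \<Rightarrow> real" where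
  "r_f f x p = f (\<chi> i. norm (p - x i))"

definition rad_f :: "(real^'n \<Rightarrow> real) \<Rightarrow> ('n::finite \<Rightarrow> 'a::real_normed_vector) \<Rightarrow> 'a set \<Rightarrow> real" where
  "rad_f f x V = (INF v\<in>V. r_f f x v)"

definition cent_f :: "real \<Rightarrow> (real^'n \<Rightarrow> real) \<Rightarrow> ('n::finite \<Rightarrow> 'a::real_normed_vector) \<Rightarrow> 'a set \<Rightarrow> 'a set" where
  "cent_f \<delta> f x V = {v\<in>V. r_f f x v \<le> rad_f f x V + \<delta>}"

end

theory Submission
  imports Defs
begin

text \<open>If the \<delta>-centres have small diameter, a minimizing sequence eventually stays in one
  of them, so it is Cauchy and converges by completeness. Conversely, if all \<delta>-centres have
  diameter at least \<epsilon>, pick in each (1/(n+1))-centre two points at distance more than \<epsilon>/2;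
  interleaving the two sequences gives a minimizing sequence that is not Cauchy.\<close>

definition near_minimizers :: "('a \<Rightarrow> real) \<Rightarrow> 'a set \<Rightarrow> real \<Rightarrow> 'a set" where
  "near_minimizers g V \<delta> = {v\<in>V. g v \<le> (INF w\<in>V. g w) + \<delta>}"

lemma cent_f_eq_near_minimizers: "cent_f \<delta> f x V = near_minimizers (r_f f x) V \<delta>"
  by (simp add: cent_f_def rad_f_def near_minimizers_def)

lemma eventually_in_near_minimizers:
  assumes "\<forall>n. v n \<in> V" and "(\<lambda>n. g (v n)) \<longlonglongrightarrow> (INF w\<in>V. g w)" and "\<delta> > 0"
  shows "\<forall>\<^sub>F n in sequentially. v n \<in> near_minimizers g V \<delta>"
proof -
  have "\<forall>\<^sub>F n in sequentially. g (v n) < (INF w\<in>V. g w) + \<delta>"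
    using order_tendstoD(2)[OF assms(2)] \<open>\<delta> > 0\<close> by simp
  then show ?thesis
    by eventually_elim (use assms(1) in \<open>auto simp: near_minimizers_def\<close>)
qed

lemma tendsto_Inf_if_near_minimizers:
  assumes "bdd_below (g ` V)" and "\<forall>n. u n \<in> near_minimizers g V (1 / Suc n)"
  shows "(\<lambda>n. g (u n)) \<longlonglongrightarrow> (INF w\<in>V. g w)"
proof (rule tendsto_sandwich)
  show "\<forall>\<^sub>F n in sequentially. (INF w\<in>V. g w) \<le> g (u n)"
    using assms by (intro always_eventually) (auto simp: near_minimizers_def intro: cINF_lower)
  show "\<forall>\<^sub>F n in sequentially. g (u n) \<le> (INF w\<in>V. g w) + 1 / Suc n"
    using assms(2) by (simp add: near_minimizers_def)
  show "(\<lambda>n. (INF w\<in>V. g w) + 1 / Suc n) \<longlonglongrightarrow> (INF w\<in>V. g w)"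
    using tendsto_add[OF tendsto_const LIMSEQ_inverse_real_of_nat] by (simp add: inverse_eq_divide)
qed simp

lemma far_points_if_not_small_diameter:
  fixes S :: "'a::metric_space set"
  assumes "\<not> (bounded S \<and> diameter S < e)" and "0 < d" and "d < e"
  obtains u w where "u \<in> S" "w \<in> S" "d < dist u w"
proof (cases "bounded S")
  case True
  then show ?thesis
    using assms diameter_lower_bounded[of S d] that by force
next
  case False
  then obtain u where "u \<in> S"
    using bounded_empty by (metis ex_in_conv)
  moreover from False obtain w where "w \<in> S" "d < dist u w"
    by (meson bounded_def not_le)
  ultimately show ?thesis using that by blast
qed

lemma LIMSEQ_interleave:
  assumes "u \<longlonglongrightarrow> L" and "w \<longlonglongrightarrow> L"
  shows "(\<lambda>k. if even k then u (k div 2) else w (k div 2)) \<longlonglongrightarrow> L"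
proof (rule topological_tendstoI)
  fix S assume "open S" "L \<in> S"
  then have "\<forall>\<^sub>F n in sequentially. u n \<in> S \<and> w n \<in> S"
    using assms by (simp add: eventually_conj topological_tendstoD)
  then obtain N where "\<forall>n\<ge>N. u n \<in> S \<and> w n \<in> S"
    by (auto simp: eventually_sequentially)
  then have "\<forall>k\<ge>2 * N. (if even k then u (k div 2) else w (k div 2)) \<in> S"
    by (metis div_le_mono nonzero_mult_div_cancel_left zero_neq_numeral)
  then show "\<forall>\<^sub>F k in sequentially. (if even k then u (k div 2) else w (k div 2)) \<in> S"
    unfolding eventually_sequentially by blast
qed

lemma not_Cauchy_interleave:
  assumes "d > 0" and "\<forall>n. d < dist (u n) (w n)"
  shows "\<not> Cauchy (\<lambda>k. if even k then u (k div 2) else w (k div 2))"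
proof
  assume "Cauchy (\<lambda>k. if even k then u (k div 2) else w (k div 2))"
  then have "(\<lambda>n. dist (u n) (w n)) \<longlonglongrightarrow> 0"
    using Met_TC.MCauchy_interleaving_gen[of u w] by simp
  then obtain N where "dist (u N) (w N) < d"
    using \<open>d > 0\<close> by (meson LIMSEQ_le_const not_le)
  with assms(2) show False
    by (meson not_less_iff_gr_or_eq)
qed

lemma Cauchy_if_near_minimizers_small:
  fixes g :: "'a::metric_space \<Rightarrow> real"
  assumes small: "\<forall>\<epsilon>>0. \<exists>\<delta>>0. bounded (near_minimizers g V \<delta>) \<and> diameter (near_minimizers g V \<delta>) < \<epsilon>"
    and "\<forall>n. v n \<in> V" and "(\<lambda>n. g (v n)) \<longlonglongrightarrow> (INF w\<in>V. g w)"
  shows "Cauchy v"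
proof (rule metric_CauchyI)
  fix e :: real assume "e > 0"
  then obtain \<delta> where "\<delta> > 0" and bdd: "bounded (near_minimizers g V \<delta>)"
    and diam: "diameter (near_minimizers g V \<delta>) < e"
    using small by blast
  then obtain M where "\<forall>n\<ge>M. v n \<in> near_minimizers g V \<delta>"
    using eventually_in_near_minimizers[OF assms(2,3)] by (auto simp: eventually_sequentially)
  then show "\<exists>M. \<forall>m\<ge>M. \<forall>n\<ge>M. dist (v m) (v n) < e"
    using diameter_bounded_bound[OF bdd] diam by (meson le_less_trans)
qed

lemma minimizing_sequences_Cauchy_iff_near_minimizers_small:
  fixes g :: "'a::metric_space \<Rightarrow> real"
  assumes "bdd_below (g ` V)"
  shows "(\<forall>v. (\<forall>n. v n \<in> V) \<longrightarrow> (\<lambda>n. g (v n)) \<longlonglongrightarrow> (INF w\<in>V. g w) \<longrightarrow> Cauchy v)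
    \<longleftrightarrow> (\<forall>\<epsilon>>0. \<exists>\<delta>>0. bounded (near_minimizers g V \<delta>) \<and> diameter (near_minimizers g V \<delta>) < \<epsilon>)"
    (is "?minimizing \<longleftrightarrow> ?small")
proof
  assume minimizing: ?minimizing
  show ?small
  proof (rule ccontr)
    assume "\<not> ?small"
    then obtain e where "e > 0"
      and large: "\<And>\<delta>. \<delta> > 0 \<Longrightarrow> \<not> (bounded (near_minimizers g V \<delta>) \<and> diameter (near_minimizers g V \<delta>) < e)"
      by blast
    have "\<exists>u w. u \<in> near_minimizers g V (1 / Suc n) \<and> w \<in> near_minimizers g V (1 / Suc n)
        \<and> e / 2 < dist u w" for n
    proof -
      have "\<not> (bounded (near_minimizers g V (1 / Suc n)) \<and> diameter (near_minimizers g V (1 / Suc n)) < e)"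
        by (rule large) simp
      moreover have "0 < e / 2" "e / 2 < e"
        using \<open>e > 0\<close> by simp_all
      ultimately obtain a b where "a \<in> near_minimizers g V (1 / Suc n)" "b \<in> near_minimizers g V (1 / Suc n)"
        and "e / 2 < dist a b"
        using far_points_if_not_small_diameter by blast
      then show ?thesis
        by blast
    qed
    then obtain u w where uw: "\<And>n. u n \<in> near_minimizers g V (1 / Suc n)"
      "\<And>n. w n \<in> near_minimizers g V (1 / Suc n)" "\<And>n. e / 2 < dist (u n) (w n)"
      by metis
    define s where "s k = (if even k then u (k div 2) else w (k div 2))" for k
    have "\<forall>k. s k \<in> V"
      using uw by (simp add: s_def near_minimizers_def)
    moreover have "(\<lambda>k. g (s k)) \<longlonglongrightarrow> (INF w\<in>V. g w)"
    proof -
      have "(\<lambda>n. g (u n)) \<longlonglongrightarrow> (INF w\<in>V. g w)" "(\<lambda>n. g (w n)) \<longlonglongrightarrow> (INF w\<in>V. g w)"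
        using tendsto_Inf_if_near_minimizers assms uw by blast+
      from LIMSEQ_interleave[OF this] show ?thesis
        by (simp add: s_def if_distrib)
    qed
    ultimately have "Cauchy s"
      using minimizing by blast
    moreover have "\<not> Cauchy s"
      unfolding s_def using not_Cauchy_interleave[of "e / 2" u w] \<open>e > 0\<close> uw(3) by simp
    ultimately show False
      by contradiction
  qed
next
  assume ?small
  then show ?minimizing
    using Cauchy_if_near_minimizers_small by blast
qed

theorem theorem3p10:
  fixes V :: "'a::banach set" and x :: "'n::finite \<Rightarrow> 'a" and f :: "real^'n \<Rightarrow> real"
  assumes "closed V"
    and "\<forall>t\<in>nonneg_orthant. 0 \<le> f t"
    and "convex_on nonneg_orthant f"
    and "monotone_fun f"
  shows "(\<forall>v :: nat \<Rightarrow> 'a. (\<forall>n. v n \<in> V) \<longrightarrow>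
            (\<lambda>n. r_f f x (v n)) \<longlonglongrightarrow> rad_f f x V \<longrightarrow> convergent v)
         \<longleftrightarrow> (\<forall>\<epsilon>>0. \<exists>\<delta>>0. bounded (cent_f \<delta> f x V) \<and> diameter (cent_f \<delta> f x V) < \<epsilon>)"
proof -
  have "0 \<le> r_f f x p" for p
    using assms(2) by (simp add: r_f_def nonneg_orthant_def)
  then have "bdd_below (r_f f x ` V)"
    by (meson bdd_belowI2)
  from minimizing_sequences_Cauchy_iff_near_minimizers_small[OF this] show ?thesis
    by (simp add: Cauchy_convergent_iff rad_f_def cent_f_eq_near_minimizers)
qed

end
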